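(* Henson's graph $U_3$ satisfies property $\mathscr{D}_3$ but does not satisfy property $\mathscr{D}_4$.
   Context: Henson's graph $U_3$ is the countable triangle-free graph (unique up to isomorphism) with the extension property: for all disjoint finite sets $A,B\subseteq V(U_3)$ with $A$ independent there is a vertex $v\notin A\cup B$ adjacent to every vertex of $A$ and to no vertex of $B$. Property $\mathscr{D}_k$: for every $m\in\{1,\dots,k\}$ and every sequence $x_1,\dots,x_{3m}$ of (not necessarily distinct) vertices there is a vertex $y$ with $|\{i\in[3m]: x_iy\in E(G)\}|\ge m+1$. *)

theory Defs
  imports Main "HOL-Library.Countable_Set"
begin

definition simple_graph :: "'a set \<Rightarrow> ('a \<Rightarrow> 'a \<Rightarrow> bool) \<Rightarrow> bool" where
  "simple_graph V E \<longleftrightarrow>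
     (\<forall>u v. E u v \<longrightarrow> u \<in> V \<and> v \<in> V) \<and>
     (\<forall>u v. E u v \<longrightarrow> E v u) \<and>
     (\<forall>v. \<not> E v v)"

definition triangle_free :: "'a set \<Rightarrow> ('a \<Rightarrow> 'a \<Rightarrow> bool) \<Rightarrow> bool" where
  "triangle_free V E \<longleftrightarrow>
     \<not> (\<exists>u\<in>V. \<exists>v\<in>V. \<exists>w\<in>V. E u v \<and> E v w \<and> E u w)"

definition independent_set :: "('a \<Rightarrow> 'a \<Rightarrow> bool) \<Rightarrow> 'a set \<Rightarrow> bool" where
  "independent_set E A \<longleftrightarrow> (\<forall>u\<in>A. \<forall>v\<in>A. \<not> E u v)"

definition henson_extension :: "'a set \<Rightarrow> ('a \<Rightarrow> 'a \<Rightarrow> bool) \<Rightarrow> bool" where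
  "henson_extension V E \<longleftrightarrow>
     (\<forall>A B. finite A \<and> finite B \<and> A \<subseteq> V \<and> B \<subseteq> V \<and> A \<inter> B = {} \<and> independent_set E A
        \<longrightarrow> (\<exists>v\<in>V. v \<notin> A \<union> B \<and> (\<forall>a\<in>A. E v a) \<and> (\<forall>b\<in>B. \<not> E v b)))"

text \<open>(V,E) is (a copy of) Henson's graph U_3: countable, triangle-free, with the extension property.
  U_3 is unique up to isomorphism, so quantifying over all such graphs is faithful.\<close>
definition is_henson_U3 :: "'a set \<Rightarrow> ('a \<Rightarrow> 'a \<Rightarrow> bool) \<Rightarrow> bool" where
  "is_henson_U3 V E \<longleftrightarrow>
     simple_graph V E \<and> countable V \<and> triangle_free V E \<and> henson_extension V E"

definition property_D :: "nat \<Rightarrow> 'a set \<Rightarrow> ('a \<Rightarrow> 'a \<Rightarrow> bool) \<Rightarrow> bool" where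
  "property_D k V E \<longleftrightarrow>
     (\<forall>m\<in>{1..k}. \<forall>x :: nat \<Rightarrow> 'a. (\<forall>i\<in>{1..3*m}. x i \<in> V) \<longrightarrow>
        (\<exists>y\<in>V. card {i\<in>{1..3*m}. E (x i) y} \<ge> m + 1))"

end

theory Submission
  imports Defs
begin

text \<open>
  Given \<open>x\<^sub>1, \<dots>, x\<^sub>3\<^sub>m\<close>, the indices carry the triangle-free graph \<open>i \<sim> j \<longleftrightarrow> x\<^sub>i x\<^sub>j \<in> E\<close>.
  Since \<open>R(3,2) = 3\<close>, \<open>R(3,3) = 6\<close> and \<open>R(3,4) = 9\<close>, for \<open>m \<le> 3\<close> it has an independent set
  of \<open>m + 1\<close> indices, and by the extension property of \<open>U\<^sub>3\<close> the corresponding vertices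
  have a common neighbour \<open>y\<close>. Conversely \<open>U\<^sub>3\<close> contains every finite triangle-free graph
  as an induced subgraph, in particular the circulant graph on \<open>\<int>/13\<close> with connection set
  \<open>{\<plusminus>1, \<plusminus>5}\<close>, which has no independent set of size 5. Listing 12 of its vertices as
  \<open>x\<^sub>1, \<dots>, x\<^sub>1\<^sub>2\<close>, the neighbours of any \<open>y\<close> among them form an independent set, so there
  are at most 4 of them and \<open>\<D>\<^sub>4\<close> fails.
\<close>

section \<open>Small Ramsey numbers for triangle-free graphs\<close>

definition forces_independent :: "('b \<Rightarrow> 'b \<Rightarrow> bool) \<Rightarrow> nat \<Rightarrow> nat \<Rightarrow> bool" where
  "forces_independent R n k \<longleftrightarrow>
     (\<forall>I. finite I \<and> n \<le> card I \<longrightarrow> (\<exists>S\<subseteq>I. independent_set R S \<and> k \<le> card S))"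

lemma forces_independent_0: "forces_independent R n 0"
  unfolding forces_independent_def independent_set_def by auto

lemma independent_set_neighbours:
  assumes "triangle_free UNIV R"
  shows "independent_set R {j\<in>I. R i j}"
  using assms unfolding triangle_free_def independent_set_def by blast

lemma independent_set_insert_non_neighbour:
  assumes "simple_graph UNIV R" "independent_set R S" "\<forall>j\<in>S. \<not> R i j"
  shows "independent_set R (insert i S)"
  using assms unfolding simple_graph_def independent_set_def by blast

lemma card_split_neighbours:
  assumes "simple_graph UNIV R" "finite I" "i \<in> I"
  shows "card I = 1 + card {j\<in>I. R i j} + card {j\<in>I. j \<noteq> i \<and> \<not> R i j}"
proof -
  let ?N = "{j\<in>I. R i j}" and ?M = "{j\<in>I. j \<noteq> i \<and> \<not> R i j}"
  have "\<not> R i i" using assms(1) unfolding simple_graph_def by blast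
  then have "i \<notin> ?N \<union> ?M" by simp
  have "I = insert i (?N \<union> ?M)" using assms(3) by auto
  then have "card I = card (insert i (?N \<union> ?M))" by (rule arg_cong)
  also have "\<dots> = Suc (card (?N \<union> ?M))"
    using \<open>i \<notin> ?N \<union> ?M\<close> assms(2) by (intro card_insert_disjoint) auto
  also have "card (?N \<union> ?M) = card ?N + card ?M"
    using assms(2) by (intro card_Un_disjoint) auto
  finally show ?thesis by simp
qed

text \<open>The degree bounds behind \<open>R(3, k + 1) \<le> R(3, k) + k + 1\<close>.\<close>

lemma degree_bounds_without_independent_set:
  assumes sg: "simple_graph UNIV R" and tf: "triangle_free UNIV R"
    and forces: "forces_independent R a b" and "finite I" "i \<in> I"
    and none: "\<not> (\<exists>S\<subseteq>I. independent_set R S \<and> b + 1 \<le> card S)"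
  shows "card {j\<in>I. R i j} \<le> b" and "card {j\<in>I. j \<noteq> i \<and> \<not> R i j} < a"
proof -
  show "card {j\<in>I. R i j} \<le> b"
    using none independent_set_neighbours[OF tf, of I i] by fastforce
  show "card {j\<in>I. j \<noteq> i \<and> \<not> R i j} < a"
  proof (rule ccontr)
    let ?N = "{j\<in>I. j \<noteq> i \<and> \<not> R i j}"
    assume "\<not> card ?N < a"
    moreover have "finite ?N" using \<open>finite I\<close> by simp
    ultimately obtain S where S: "S \<subseteq> ?N" "independent_set R S" "b \<le> card S"
      using forces unfolding forces_independent_def by (meson not_le)
    have "i \<notin> S" using S(1) by blast
    then have "card (insert i S) = card S + 1"
      using finite_subset[OF S(1) \<open>finite ?N\<close>] by simp
    moreover have "independent_set R (insert i S)"
      using independent_set_insert_non_neighbour[OF sg S(2)] S(1) by blast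
    moreover have "insert i S \<subseteq> I" using S(1) \<open>i \<in> I\<close> by auto
    ultimately show False using none S(3) by fastforce
  qed
qed

lemma forces_independent_step:
  fixes R :: "'b \<Rightarrow> 'b \<Rightarrow> bool"
  assumes sg: "simple_graph UNIV R" and tf: "triangle_free UNIV R"
    and forces: "forces_independent R a b"
  shows "forces_independent R (a + b + 1) (b + 1)"
  unfolding forces_independent_def
proof (intro allI impI)
  fix I :: "'b set"
  assume I: "finite I \<and> a + b + 1 \<le> card I"
  then obtain i where "i \<in> I" by fastforce
  show "\<exists>S\<subseteq>I. independent_set R S \<and> b + 1 \<le> card S"
  proof (rule ccontr)
    assume none: "\<not> ?thesis"
    note bounds = degree_bounds_without_independent_set[OF sg tf forces _ \<open>i \<in> I\<close> none]
    show False
      using I bounds card_split_neighbours[OF sg _ \<open>i \<in> I\<close>] by fastforce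
  qed
qed

lemma even_sum_degrees:
  fixes R :: "'b::linorder \<Rightarrow> 'b \<Rightarrow> bool"
  assumes "simple_graph UNIV R" "finite J"
  shows "even (\<Sum>i\<in>J. card {j\<in>J. R i j})"
proof -
  have sym: "R i j \<Longrightarrow> R j i" and irrefl: "\<not> R i i" for i j
    using assms(1) unfolding simple_graph_def by blast+
  define L where "L = {(i, j)\<in>J \<times> J. R i j \<and> i < j}"
  define U where "U = {(i, j)\<in>J \<times> J. R i j \<and> j < i}"
  have fin: "finite L" "finite U"
    unfolding L_def U_def using assms(2) by (auto intro: finite_subset[of _ "J \<times> J"])
  have "bij_betw (\<lambda>(i, j). (j, i)) L U"
    unfolding bij_betw_def inj_on_def L_def U_def using sym by (auto simp: image_def)
  then have "card U = card L" by (simp add: bij_betw_same_card)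
  have "(\<Sum>i\<in>J. card {j\<in>J. R i j}) = card (SIGMA i:J. {j\<in>J. R i j})"
    using assms(2) by (simp add: card_SigmaI)
  also have "(SIGMA i:J. {j\<in>J. R i j}) = L \<union> U"
    unfolding L_def U_def using irrefl by (auto, metis linorder_neqE)
  also have "card (L \<union> U) = card L + card U"
    using fin by (rule card_Un_disjoint) (auto simp: L_def U_def)
  finally show ?thesis using \<open>card U = card L\<close> by simp
qed

text \<open>
  \<open>R(3,4) = 9\<close> needs parity: in a 9-vertex counterexample every vertex would have
  exactly 3 neighbours (at most 3 by triangle-freeness, at most 5 non-neighbours by
  \<open>R(3,3) = 6\<close>), and 9 vertices of odd degree are impossible.
\<close>

lemma forces_independent_9_4:
  fixes R :: "'b::linorder \<Rightarrow> 'b \<Rightarrow> bool"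
  assumes sg: "simple_graph UNIV R" and tf: "triangle_free UNIV R"
    and forces: "forces_independent R 6 3"
  shows "forces_independent R 9 4"
  unfolding forces_independent_def
proof (intro allI impI)
  fix I :: "'b set"
  assume I: "finite I \<and> 9 \<le> card I"
  then obtain J where J: "J \<subseteq> I" "card J = 9" by (meson obtain_subset_with_card_n)
  have "finite J" using J(2) by (simp add: card_ge_0_finite)
  show "\<exists>S\<subseteq>I. independent_set R S \<and> 4 \<le> card S"
  proof (rule ccontr)
    assume "\<not> ?thesis"
    then have none: "\<not> (\<exists>S\<subseteq>J. independent_set R S \<and> 3 + 1 \<le> card S)"
      using J(1) by auto
    have "card {j\<in>J. R i j} = 3" if "i \<in> J" for i
      using degree_bounds_without_independent_set[OF sg tf forces \<open>finite J\<close> that none]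
        card_split_neighbours[OF sg \<open>finite J\<close> that] J(2) by linarith
    then have "(\<Sum>i\<in>J. card {j\<in>J. R i j}) = (\<Sum>i\<in>J. 3)" by (rule sum.cong[OF refl])
    also have "\<dots> = 27" using J(2) by simp
    finally show False using even_sum_degrees[OF sg \<open>finite J\<close>] by simp
  qed
qed

lemma forces_independent_triple:
  fixes R :: "'b::linorder \<Rightarrow> 'b \<Rightarrow> bool"
  assumes sg: "simple_graph UNIV R" and tf: "triangle_free UNIV R" and "m \<in> {1..3}"
  shows "forces_independent R (3 * m) (m + 1)"
proof -
  note step = forces_independent_step[OF sg tf]
  have "forces_independent R 1 1" using step[OF forces_independent_0, of 0] by simp
  then have f3: "forces_independent R 3 2"
    using step[of 1 1] by (simp add: numeral_3_eq_3 numeral_2_eq_2)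
  have f6: "forces_independent R 6 3" using step[OF f3] by simp
  have f9: "forces_independent R 9 4" by (rule forces_independent_9_4[OF sg tf f6])
  from \<open>m \<in> {1..3}\<close> consider "m = 1" | "m = 2" | "m = 3" by fastforce
  then show ?thesis
  proof cases
    case 1
    then show ?thesis using f3 by (simp add: numeral_2_eq_2)
  next
    case 2
    then show ?thesis using f6 by simp
  next
    case 3
    then show ?thesis using f9 by simp
  qed
qed

section \<open>Henson's graph\<close>

lemma triangle_free_compose:
  assumes "simple_graph V E" "triangle_free V E"
  shows "simple_graph UNIV (\<lambda>i j. E (x i) (x j))"
    and "triangle_free UNIV (\<lambda>i j. E (x i) (x j))"
proof -
  show "simple_graph UNIV (\<lambda>i j. E (x i) (x j))"
    using assms(1) unfolding simple_graph_def by simp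
  show "triangle_free UNIV (\<lambda>i j. E (x i) (x j))"
    using assms unfolding simple_graph_def triangle_free_def by meson
qed

lemma henson_common_neighbour:
  assumes "henson_extension V E" "finite A" "A \<subseteq> V" "independent_set E A"
  obtains v where "v \<in> V" "\<forall>a\<in>A. E v a"
  using assms(1)[unfolded henson_extension_def, rule_format, of A "{}"] assms(2-4) by auto

lemma henson_property_D3:
  assumes sg: "simple_graph V E" and tf: "triangle_free V E" and ext: "henson_extension V E"
  shows "property_D 3 V E"
  unfolding property_D_def
proof (intro ballI allI impI)
  fix m and x :: "nat \<Rightarrow> 'a"
  assume m: "m \<in> {1..3}" and xV: "\<forall>i\<in>{1..3 * m}. x i \<in> V"
  have "forces_independent (\<lambda>i j. E (x i) (x j)) (3 * m) (m + 1)"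
    using forces_independent_triple[OF triangle_free_compose[OF sg tf, of x] m] .
  then have "\<exists>S\<subseteq>{1..3 * m}. independent_set (\<lambda>i j. E (x i) (x j)) S \<and> m + 1 \<le> card S"
    unfolding forces_independent_def by (elim allE[of _ "{1..3 * m}"]) simp
  then obtain S where S: "S \<subseteq> {1..3 * m}" "independent_set (\<lambda>i j. E (x i) (x j)) S" "m + 1 \<le> card S"
    by blast
  have "finite S" using S(1) by (rule finite_subset) simp
  then have "finite (x ` S)" by simp
  moreover have "x ` S \<subseteq> V" using S(1) xV by auto
  moreover have "independent_set E (x ` S)"
    using S(2) unfolding independent_set_def by simp
  ultimately obtain y where "y \<in> V" and y: "\<forall>a\<in>x ` S. E y a"
    by (rule henson_common_neighbour[OF ext])
  have "S \<subseteq> {i\<in>{1..3 * m}. E (x i) y}"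
    using S(1) y sg unfolding simple_graph_def by auto
  then have "card S \<le> card {i\<in>{1..3 * m}. E (x i) y}"
    by (rule card_mono[rotated]) simp
  then show "\<exists>y\<in>V. m + 1 \<le> card {i\<in>{1..3 * m}. E (x i) y}"
    using \<open>y \<in> V\<close> S(3) by (meson order_trans)
qed

lemma henson_extend_embedding:
  fixes P :: "nat \<Rightarrow> nat \<Rightarrow> bool"
  assumes sg: "simple_graph V E" and ext: "henson_extension V E"
    and tfP: "triangle_free UNIV P"
    and xV: "\<forall>i<n. x i \<in> V" and inj: "inj_on x {..<n}"
    and xE: "\<forall>i<n. \<forall>j<n. E (x i) (x j) \<longleftrightarrow> P i j"
  obtains v where "v \<in> V" "v \<notin> x ` {..<n}" "\<forall>i<n. E (x i) v \<longleftrightarrow> P i n"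
proof -
  define A where "A = x ` {i. i < n \<and> P i n}"
  define B where "B = x ` {i. i < n \<and> \<not> P i n}"
  have "A \<inter> B = {}"
    using inj unfolding A_def B_def inj_on_def by auto
  moreover have "independent_set E A"
    using xE tfP unfolding A_def independent_set_def triangle_free_def by auto
  moreover have "finite A" "finite B" "A \<subseteq> V" "B \<subseteq> V"
    using xV unfolding A_def B_def by auto
  ultimately obtain v where v: "v \<in> V" "v \<notin> A \<union> B" "\<forall>a\<in>A. E v a" "\<forall>b\<in>B. \<not> E v b"
    using ext unfolding henson_extension_def by meson
  have symE: "E u w \<Longrightarrow> E w u" for u w
    using sg unfolding simple_graph_def by blast
  have "A \<union> B = x ` {..<n}" unfolding A_def B_def by auto
  moreover have "E (x i) v \<longleftrightarrow> P i n" if "i < n" for i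
  proof
    assume "E (x i) v"
    then have "x i \<notin> B" using v(4) symE by blast
    then show "P i n" using that by (auto simp: B_def)
  next
    assume "P i n"
    then have "x i \<in> A" using that by (auto simp: A_def)
    then show "E (x i) v" using v(3) symE by blast
  qed
  ultimately show thesis using that v(1,2) by blast
qed

lemma henson_induced_embedding:
  fixes P :: "nat \<Rightarrow> nat \<Rightarrow> bool"
  assumes sg: "simple_graph V E" and ext: "henson_extension V E"
    and sgP: "simple_graph UNIV P" and tfP: "triangle_free UNIV P"
  shows "\<exists>x. (\<forall>i<n. x i \<in> V) \<and> inj_on x {..<n} \<and> (\<forall>i<n. \<forall>j<n. E (x i) (x j) \<longleftrightarrow> P i j)"
proof (induction n)
  case 0
  show ?case by simp
next
  case (Suc n)
  then obtain x where xV: "\<forall>i<n. x i \<in> V" and inj: "inj_on x {..<n}"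
    and xE: "\<forall>i<n. \<forall>j<n. E (x i) (x j) \<longleftrightarrow> P i j" by blast
  obtain v where v: "v \<in> V" "v \<notin> x ` {..<n}" and vE: "\<forall>i<n. E (x i) v \<longleftrightarrow> P i n"
    using henson_extend_embedding[OF sg ext tfP xV inj xE] by blast
  have symE: "E u w \<longleftrightarrow> E w u" and irreflE: "\<not> E u u" for u w
    using sg unfolding simple_graph_def by blast+
  have symP: "P i j \<longleftrightarrow> P j i" and irreflP: "\<not> P i i" for i j
    using sgP unfolding simple_graph_def by blast+
  define x' where "x' = x(n := v)"
  have "E (x' i) (x' j) \<longleftrightarrow> P i j" if "i < Suc n" "j < Suc n" for i j
    using that xE vE symE symP irreflE irreflP unfolding x'_def
    by (cases "i = n"; cases "j = n") auto
  moreover have "inj_on x' {..<Suc n}"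
    using inj v(2) unfolding x'_def by (simp add: lessThan_Suc inj_on_def) blast
  moreover have "\<forall>i<Suc n. x' i \<in> V"
    using xV v(1) unfolding x'_def by (simp add: less_Suc_eq)
  ultimately show ?case by blast
qed

section \<open>The circulant graph on 13 vertices\<close>

text \<open>
  On \<open>{0..<13}\<close> this is the circulant graph of \<open>\<int>/13\<close> with connection set \<open>{\<plusminus>1, \<plusminus>5}\<close>
  (8 and 12 are \<open>-5\<close> and \<open>-1\<close> modulo 13), the extremal graph for \<open>R(3,5) = 14\<close>.
  On all of \<open>\<nat>\<close> it is still triangle-free, since no element of \<open>{1, 5, 8, 12}\<close> is the
  sum of two others.
\<close>

definition circulant13 :: "nat \<Rightarrow> nat \<Rightarrow> bool" where
  "circulant13 i j \<longleftrightarrow> (\<exists>d\<in>{1, 5, 8, 12}. i + d = j \<or> j + d = i)"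

lemma simple_graph_circulant13: "simple_graph UNIV circulant13"
  unfolding simple_graph_def circulant13_def by auto

lemma triangle_free_circulant13: "triangle_free UNIV circulant13"
  unfolding triangle_free_def circulant13_def by auto

lemma circulant13_no_independent_five:
  fixes a b c d e :: nat
  assumes "a < b" "b < c" "c < d" "d < e" "e < 13"
  shows "\<not> independent_set circulant13 {a, b, c, d, e}"
proof
  assume "independent_set circulant13 {a, b, c, d, e}"
  then have far: "p + k \<noteq> q"
    if "p \<in> {a, b, c, d, e}" "q \<in> {a, b, c, d, e}" "k \<in> {1, 5, 8, 12}" for p q k
    using that unfolding independent_set_def circulant13_def by blast
  have gaps: "a + 2 \<le> b" "b + 2 \<le> c" "c + 2 \<le> d" "d + 2 \<le> e"
    using assms far[of a b 1] far[of b c 1] far[of c d 1] far[of d e 1] by auto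
  have span: "a + 9 \<le> e" "e \<le> a + 11"
    using assms gaps far[of a e 8] far[of a e 12] by auto
  have "c \<noteq> a + 5" "e \<noteq> c + 5" using far[of a c 5] far[of c e 5] by simp_all
  with gaps span consider "c = a + 4" | "e = c + 4" by linarith
  then show False
  proof cases
    case 1
    then have "b = a + 2" using gaps by linarith
    then have "d = a + 6"
      using 1 gaps span far[of b d 5] far[of a d 8] far[of c d 5] by auto
    then show False
      using 1 \<open>b = a + 2\<close> gaps span far[of c e 5] far[of b e 8] far[of d e 5] by auto
  next
    case 2
    then have "d = c + 2" using gaps by linarith
    then have "b + 2 = c"
      using 2 gaps span far[of b d 5] far[of b e 8] far[of b c 5] by auto
    then show False
      using 2 \<open>d = c + 2\<close> gaps span far[of a c 5] far[of a d 8] far[of a b 5] by auto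
  qed
qed

lemma five_increasing_elements:
  fixes S :: "'b::linorder set"
  assumes "finite S" "5 \<le> card S"
  obtains a b c d e where "a < b" "b < c" "c < d" "d < e" "{a, b, c, d, e} \<subseteq> S"
proof -
  define l where "l = sorted_list_of_set S"
  have l: "length l = card S" "set l = S" "sorted_wrt (<) l"
    unfolding l_def using assms(1) by auto
  have "l ! p < l ! q" if "p < q" "q < 5" for p q
    using l(1,3) that assms(2) by (simp add: sorted_wrt_iff_nth_less)
  moreover have "l ! p \<in> S" if "p < 5" for p
    using l(1,2) that assms(2) by (metis nth_mem order_less_le_trans)
  ultimately show thesis
    using that[of "l ! 0" "l ! 1" "l ! 2" "l ! 3" "l ! 4"] by simp
qed

lemma circulant13_independent_card:
  assumes "independent_set circulant13 S" "S \<subseteq> {..<13}"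
  shows "card S \<le> 4"
proof (rule ccontr)
  assume "\<not> card S \<le> 4"
  then have "5 \<le> card S" by simp
  moreover have "finite S" using assms(2) by (rule finite_subset) simp
  ultimately obtain a b c d e where
    order: "a < b" "b < c" "c < d" "d < e" and sub: "{a, b, c, d, e} \<subseteq> S"
    using five_increasing_elements by blast
  have "e < 13" using sub assms(2) by auto
  moreover have "independent_set circulant13 {a, b, c, d, e}"
    using assms(1) sub unfolding independent_set_def by blast
  ultimately show False using circulant13_no_independent_five[OF order] by blast
qed

lemma henson_not_property_D4:
  assumes sg: "simple_graph V E" and tf: "triangle_free V E" and ext: "henson_extension V E"
  shows "\<not> property_D 4 V E"
proof
  assume D4: "property_D 4 V E"
  obtain x where xV: "\<forall>i<13. x i \<in> V" and xE: "\<forall>i<13. \<forall>j<13. E (x i) (x j) \<longleftrightarrow> circulant13 i j"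
    using henson_induced_embedding[OF sg ext simple_graph_circulant13 triangle_free_circulant13]
    by blast
  have "\<forall>i\<in>{1..3 * 4}. x i \<in> V" using xV by simp
  then have "\<exists>y\<in>V. 4 + 1 \<le> card {i\<in>{1..3 * 4}. E (x i) y}"
    using D4[unfolded property_D_def, rule_format, of 4 x] by simp
  then obtain y where "4 + 1 \<le> card {i\<in>{1..3 * 4}. E (x i) y}" by blast
  moreover define N where "N = {i\<in>{1..3 * 4}. E (x i) y}"
  moreover have "N \<subseteq> {..<13}" unfolding N_def by auto
  moreover have "independent_set circulant13 N"
    unfolding independent_set_def
  proof (intro ballI notI)
    fix i j assume "i \<in> N" "j \<in> N" "circulant13 i j"
    then have "E (x i) (x j)" "E (x j) y" "E (x i) y"
      using xE \<open>N \<subseteq> {..<13}\<close> unfolding N_def by auto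
    moreover have "x i \<in> V" "x j \<in> V" "y \<in> V"
      using calculation sg unfolding simple_graph_def by blast+
    ultimately show False using tf unfolding triangle_free_def by blast
  qed
  ultimately show False using circulant13_independent_card[of N] by simp
qed

theorem theorem5p3:
  fixes V :: "'a set" and E :: "'a \<Rightarrow> 'a \<Rightarrow> bool"
  assumes "is_henson_U3 V E"
  shows "property_D 3 V E \<and> \<not> property_D 4 V E"
  using assms henson_property_D3 henson_not_property_D4 unfolding is_henson_U3_def by blast

end
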